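(* Given $\lambda > 0$, let $L > 0$ be sufficiently large. Let $\eta$ be a Poisson point process in the plane of intensity $1$, and let $R$ be a $\lambda L \times L$ rectangle with sides parallel to the axes such that $$\min\{ x : (x,y) \in R \} \geqslant (\log L)^{2/3}.$$ Then the Voronoi tilings of $R$ induced by $\eta$ and by $\mathbb{H} \cap \eta$ are non-identical with probability at most $1/L^3$.
   Context: $\mathbb{H} = \{(x,y) \in \mathbb{R}^2 : x \geqslant 0\}$. The Voronoi tiling induced by a point set $P$ assigns to each $u \in P$ the cell of points at least as close to $u$ as to any other point of $P$ (for $\mathbb{H}\cap\eta$, cells are taken within $\mathbb{H}$); the tiling of $R$ is its restriction to $R$. *)

theory Defs
  imports "HOL-Probability.Probability"
begin

type_synonym pt = "real \<times> real"

definition halfplane :: "pt set" where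
  "halfplane = {p. fst p \<ge> 0}"

definition poisson_pp :: "'w measure \<Rightarrow> ('w \<Rightarrow> pt set) \<Rightarrow> bool" where
  "poisson_pp M \<eta> \<longleftrightarrow> prob_space M
    \<and> (\<forall>\<omega>\<in>space M. \<forall>B. bounded B \<longrightarrow> finite (\<eta> \<omega> \<inter> B))
    \<and> (\<forall>B\<in>sets (lborel :: pt measure). bounded B \<longrightarrow>
          (\<lambda>\<omega>. card (\<eta> \<omega> \<inter> B)) \<in> measurable M (count_space UNIV)
        \<and> (\<forall>k::nat. measure M {\<omega>\<in>space M. card (\<eta> \<omega> \<inter> B) = k}
               = exp (- measure lborel B) * measure lborel B ^ k / fact k))
    \<and> (\<forall>(I::nat set) (B::nat \<Rightarrow> pt set). finite I \<longrightarrow>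
          (\<forall>i\<in>I. B i \<in> sets lborel \<and> bounded (B i)) \<longrightarrow>
          disjoint_family_on B I \<longrightarrow>
          prob_space.indep_vars M (\<lambda>_. count_space UNIV) (\<lambda>i \<omega>. card (\<eta> \<omega> \<inter> B i)) I)"

definition voronoi_cell :: "pt set \<Rightarrow> pt set \<Rightarrow> pt \<Rightarrow> pt set" where
  "voronoi_cell S P u = {z\<in>S. \<forall>v\<in>P. dist z u \<le> dist z v}"

definition voronoi_tiling :: "pt set \<Rightarrow> pt set \<Rightarrow> pt set \<Rightarrow> pt set set" where
  "voronoi_tiling S P R = {voronoi_cell S P u \<inter> R | u. u \<in> P \<and> voronoi_cell S P u \<inter> R \<noteq> {}}"

end

theory Submission
  imports Defs "HOL-Real_Asymp.Real_Asymp"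
begin

text \<open>If every point of R has a point of \<open>\<eta>\<close> at distance less than \<open>a\<close>, while R lies at
 distance at least \<open>a\<close> from the open left half-plane, then points of \<open>\<eta>\<close> with negative abscissa
 are never nearest to a point of R, so both tilings of R coincide. It therefore suffices to
 bound the probability that some point of R sees no point of \<open>\<eta>\<close> within \<open>a \<ge> (log L)\<^sup>2\<^sup>/\<^sup>3\<close>.
 Cutting R into about \<open>L\<^sup>2/s\<^sup>2\<close> squares of side \<open>s = (log L)\<^sup>2\<^sup>/\<^sup>3/3\<close>, such a point forces one
 of these squares to be empty, which has probability \<open>exp (-s\<^sup>2)\<close>; the union bound
 \<open>O(L\<^sup>2) exp (-(log L)\<^sup>4\<^sup>/\<^sup>3/9)\<close> is eventually below \<open>L\<^sup>-\<^sup>3\<close>.\<close>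

lemma dist_gt_if_fst_separated:
  assumes "fst z \<ge> a" "fst v < 0"
  shows "dist z v > a"
  using dist_fst_le[of z v] assms by (simp add: dist_real_def)

locale far_from_left_half =
  fixes R P :: "pt set" and a :: real
  assumes fst_ge: "\<And>z. z \<in> R \<Longrightarrow> fst z \<ge> a"
    and near_point: "\<And>z. z \<in> R \<Longrightarrow> \<exists>w\<in>P. dist z w < a"
begin

lemma nearby_point_in_halfplane:
  assumes "z \<in> R"
  obtains w where "w \<in> halfplane \<inter> P" "dist z w < a"
proof -
  obtain w where w: "w \<in> P" "dist z w < a" using near_point assms by blast
  have "\<not> fst w < 0" using dist_gt_if_fst_separated[of a z w] fst_ge[OF assms] w by linarith
  with w show thesis by (intro that) (auto simp: halfplane_def)
qed

lemma subset_halfplane: "R \<subseteq> halfplane"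
proof
  fix z assume "z \<in> R"
  then obtain w where "dist z w < a" by (rule nearby_point_in_halfplane)
  then have "a > 0" using zero_le_dist[of z w] by linarith
  with fst_ge[OF \<open>z \<in> R\<close>] show "z \<in> halfplane" by (simp add: halfplane_def)
qed

lemma voronoi_cell_eq:
  assumes "u \<in> halfplane"
  shows "voronoi_cell UNIV P u \<inter> R = voronoi_cell halfplane (halfplane \<inter> P) u \<inter> R"
proof (intro equalityI subsetI)
  fix z assume "z \<in> voronoi_cell UNIV P u \<inter> R"
  then show "z \<in> voronoi_cell halfplane (halfplane \<inter> P) u \<inter> R"
    using subset_halfplane by (auto simp: voronoi_cell_def)
next
  fix z assume z: "z \<in> voronoi_cell halfplane (halfplane \<inter> P) u \<inter> R"
  then have zR: "z \<in> R" and closest: "\<And>v. v \<in> halfplane \<inter> P \<Longrightarrow> dist z u \<le> dist z v"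
    by (auto simp: voronoi_cell_def)
  obtain w where "w \<in> halfplane \<inter> P" "dist z w < a"
    using zR by (rule nearby_point_in_halfplane)
  with closest have du: "dist z u < a" by fastforce
  have "dist z u \<le> dist z v" if "v \<in> P" for v
  proof (cases "v \<in> halfplane")
    case True with closest that show ?thesis by blast
  next
    case False
    then have "dist z v > a"
      by (intro dist_gt_if_fst_separated fst_ge zR) (simp add: halfplane_def)
    with du show ?thesis by linarith
  qed
  with zR show "z \<in> voronoi_cell UNIV P u \<inter> R" by (simp add: voronoi_cell_def)
qed

lemma voronoi_cell_outside_halfplane:
  assumes "u \<notin> halfplane"
  shows "voronoi_cell UNIV P u \<inter> R = {}"
proof (rule ccontr)
  assume "voronoi_cell UNIV P u \<inter> R \<noteq> {}"
  then obtain z where zR: "z \<in> R" and closest: "\<And>v. v \<in> P \<Longrightarrow> dist z u \<le> dist z v"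
    by (auto simp: voronoi_cell_def)
  obtain w where "w \<in> halfplane \<inter> P" "dist z w < a"
    using zR by (rule nearby_point_in_halfplane)
  moreover have "dist z u > a"
    using assms by (intro dist_gt_if_fst_separated fst_ge zR) (simp add: halfplane_def)
  ultimately show False using closest by fastforce
qed

lemma voronoi_tiling_eq:
  "voronoi_tiling UNIV P R = voronoi_tiling halfplane (halfplane \<inter> P) R"
  unfolding voronoi_tiling_def
  using voronoi_cell_eq voronoi_cell_outside_halfplane by blast

end

lemma voronoi_tilings_differ_imp_far_point:
  assumes "\<And>z. z \<in> R \<Longrightarrow> fst z \<ge> a"
    and "voronoi_tiling UNIV P R \<noteq> voronoi_tiling halfplane (halfplane \<inter> P) R"
  obtains z where "z \<in> R" "\<forall>p\<in>P. dist z p \<ge> a"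
  using assms far_from_left_half.voronoi_tiling_eq[of R P a]
  by (fastforce simp: far_from_left_half_def not_less)

lemma dist_le_in_square:
  assumes "z \<in> {x..x + s} \<times> {y..y + s}" "p \<in> {x..x + s} \<times> {y..y + s}"
  shows "dist z p \<le> 2 * s"
proof -
  have "\<bar>fst z - fst p\<bar> \<le> s" "\<bar>snd z - snd p\<bar> \<le> s" using assms by auto
  then show ?thesis
    using sqrt_sum_squares_le_sum_abs[of "fst z - fst p" "snd z - snd p"]
    by (simp add: dist_prod_def dist_real_def)
qed

lemma interval_covered_by_grid:
  assumes "s > 0" "x \<in> {a..a + w}"
  obtains i where "i < nat \<lfloor>w / s\<rfloor> + 1" "x \<in> {a + real i * s..a + real i * s + s}"
proof
  define k where "k = \<lfloor>(x - a) / s\<rfloor>"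
  have k: "real (nat k) = of_int k" using assms by (simp add: k_def)
  have "of_int k \<le> (x - a) / s" "(x - a) / s < of_int k + 1"
    unfolding k_def by linarith+
  with assms k show "x \<in> {a + real (nat k) * s..a + real (nat k) * s + s}"
    by (auto simp: field_simps)
  have "k \<le> \<lfloor>w / s\<rfloor>"
    unfolding k_def using assms by (intro floor_mono divide_right_mono) auto
  then show "nat k < nat \<lfloor>w / s\<rfloor> + 1" by linarith
qed

lemma measure_lborel_square:
  assumes "s \<ge> 0"
  shows "measure lborel ({x..x + s} \<times> {y..y + s} :: pt set) = s\<^sup>2"
proof -
  have "emeasure (lborel \<Otimes>\<^sub>M lborel) ({x..x + s} \<times> {y..y + s} :: pt set) = ennreal s * ennreal s"
    using assms by (subst lborel.emeasure_pair_measure_Times) auto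
  then show ?thesis
    using assms unfolding lborel_prod
    by (simp add: measure_def power2_eq_square ennreal_mult[symmetric])
qed

lemma poisson_pp_prob_empty:
  assumes "poisson_pp M \<eta>" "B \<in> sets lborel" "bounded B"
  shows "{\<omega>\<in>space M. \<eta> \<omega> \<inter> B = {}} \<in> sets M"
    and "measure M {\<omega>\<in>space M. \<eta> \<omega> \<inter> B = {}} = exp (- measure lborel B)"
proof -
  have count: "(\<lambda>\<omega>. card (\<eta> \<omega> \<inter> B)) \<in> measurable M (count_space UNIV)"
    and prob0: "measure M {\<omega>\<in>space M. card (\<eta> \<omega> \<inter> B) = 0} = exp (- measure lborel B)"
    using assms unfolding poisson_pp_def by (fastforce+)
  have "{\<omega>\<in>space M. \<eta> \<omega> \<inter> B = {}} = {\<omega>\<in>space M. card (\<eta> \<omega> \<inter> B) = 0}"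
    using assms(1,3) by (auto simp: poisson_pp_def)
  moreover have "{\<omega>\<in>space M. card (\<eta> \<omega> \<inter> B) = 0} = (\<lambda>\<omega>. card (\<eta> \<omega> \<inter> B)) -` {0} \<inter> space M"
    by auto
  ultimately show "{\<omega>\<in>space M. \<eta> \<omega> \<inter> B = {}} \<in> sets M"
    and "measure M {\<omega>\<in>space M. \<eta> \<omega> \<inter> B = {}} = exp (- measure lborel B)"
    using measurable_sets[OF count, of "{0}"] prob0 by simp_all
qed

lemma poisson_pp_hole_in_rectangle:
  assumes pp: "poisson_pp M \<eta>" and "s > 0" "w \<ge> 0" "h \<ge> 0"
  shows "\<exists>A\<in>sets M. {\<omega>\<in>space M. \<exists>z\<in>{a..a + w} \<times> {b..b + h}. \<forall>p\<in>\<eta> \<omega>. dist z p > 2 * s} \<subseteq> A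
           \<and> measure M A \<le> (w / s + 1) * (h / s + 1) * exp (- s\<^sup>2)"
proof -
  interpret prob_space M using pp by (simp add: poisson_pp_def)
  define I where "I = {..<nat \<lfloor>w / s\<rfloor> + 1} \<times> {..<nat \<lfloor>h / s\<rfloor> + 1}"
  define Q where "Q = (\<lambda>(i, j). {a + real i * s..a + real i * s + s} \<times> {b + real j * s..b + real j * s + s})"
  define E where "E = (\<lambda>ij. {\<omega>\<in>space M. \<eta> \<omega> \<inter> Q ij = {}})"
  have Q: "Q ij \<in> sets lborel" "bounded (Q ij)" for ij
    by (auto simp: Q_def split: prod.splits intro!: bounded_Times borel_closed closed_Times)
  have E: "E ij \<in> events" "prob (E ij) = exp (- s\<^sup>2)" for ij
    using poisson_pp_prob_empty[OF pp Q] measure_lborel_square \<open>s > 0\<close>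
    by (auto simp: E_def Q_def split: prod.splits)
  have "{\<omega>\<in>space M. \<exists>z\<in>{a..a + w} \<times> {b..b + h}. \<forall>p\<in>\<eta> \<omega>. dist z p > 2 * s} \<subseteq> (\<Union>ij\<in>I. E ij)"
  proof
    fix \<omega> assume "\<omega> \<in> {\<omega>\<in>space M. \<exists>z\<in>{a..a + w} \<times> {b..b + h}. \<forall>p\<in>\<eta> \<omega>. dist z p > 2 * s}"
    then obtain x y where \<omega>: "\<omega> \<in> space M" and "(x, y) \<in> {a..a + w} \<times> {b..b + h}"
      and far: "\<forall>p\<in>\<eta> \<omega>. dist (x, y) p > 2 * s"
      by blast
    obtain i where "i < nat \<lfloor>w / s\<rfloor> + 1" "x \<in> {a + real i * s..a + real i * s + s}"
      using interval_covered_by_grid \<open>s > 0\<close> \<open>(x, y) \<in> _\<close> by blast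
    moreover obtain j where "j < nat \<lfloor>h / s\<rfloor> + 1" "y \<in> {b + real j * s..b + real j * s + s}"
      using interval_covered_by_grid \<open>s > 0\<close> \<open>(x, y) \<in> _\<close> by blast
    ultimately have ij: "(i, j) \<in> I" and "(x, y) \<in> Q (i, j)" by (simp_all add: I_def Q_def)
    then have "\<eta> \<omega> \<inter> Q (i, j) = {}"
      using far dist_le_in_square by (fastforce simp: Q_def)
    with \<omega> ij show "\<omega> \<in> (\<Union>ij\<in>I. E ij)" by (auto simp: E_def)
  qed
  moreover have "prob (\<Union>ij\<in>I. E ij) \<le> (w / s + 1) * (h / s + 1) * exp (- s\<^sup>2)"
  proof -
    have "prob (\<Union>ij\<in>I. E ij) \<le> (\<Sum>ij\<in>I. prob (E ij))"
      using E by (intro finite_measure_subadditive_finite) (auto simp: I_def)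
    also have "\<dots> = real (nat \<lfloor>w / s\<rfloor> + 1) * real (nat \<lfloor>h / s\<rfloor> + 1) * exp (- s\<^sup>2)"
      by (simp add: E I_def card_cartesian_product distrib_left distrib_right)
    also have "\<dots> \<le> (w / s + 1) * (h / s + 1) * exp (- s\<^sup>2)"
      using assms by (intro mult_right_mono mult_mono) (auto simp: of_nat_nat)
    finally show ?thesis .
  qed
  moreover have "(\<Union>ij\<in>I. E ij) \<in> events" using E by (auto simp: I_def)
  ultimately show ?thesis by blast
qed

lemma poisson_pp_voronoi_tilings_differ:
  assumes pp: "poisson_pp M \<eta>" and "s > 0" "2 * s < a" "w \<ge> 0" "h \<ge> 0"
  shows "\<exists>A\<in>sets M. {\<omega>\<in>space M. voronoi_tiling UNIV (\<eta> \<omega>) ({a..a + w} \<times> {b..b + h})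
             \<noteq> voronoi_tiling halfplane (halfplane \<inter> \<eta> \<omega>) ({a..a + w} \<times> {b..b + h})} \<subseteq> A
           \<and> measure M A \<le> (w / s + 1) * (h / s + 1) * exp (- s\<^sup>2)"
proof -
  define R where "R = {a..a + w} \<times> {b..b + h}"
  have "{\<omega>\<in>space M. voronoi_tiling UNIV (\<eta> \<omega>) R \<noteq> voronoi_tiling halfplane (halfplane \<inter> \<eta> \<omega>) R}
      \<subseteq> {\<omega>\<in>space M. \<exists>z\<in>R. \<forall>p\<in>\<eta> \<omega>. dist z p > 2 * s}"
  proof
    fix \<omega> assume "\<omega> \<in> {\<omega>\<in>space M. voronoi_tiling UNIV (\<eta> \<omega>) R
                        \<noteq> voronoi_tiling halfplane (halfplane \<inter> \<eta> \<omega>) R}"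
    then have \<omega>: "\<omega> \<in> space M"
      and differ: "voronoi_tiling UNIV (\<eta> \<omega>) R \<noteq> voronoi_tiling halfplane (halfplane \<inter> \<eta> \<omega>) R"
      by auto
    have "\<And>z. z \<in> R \<Longrightarrow> fst z \<ge> a" by (auto simp: R_def)
    then obtain z where "z \<in> R" and "\<forall>p\<in>\<eta> \<omega>. dist z p \<ge> a"
      using differ by (rule voronoi_tilings_differ_imp_far_point)
    with \<open>2 * s < a\<close> have "z \<in> R" "\<forall>p\<in>\<eta> \<omega>. dist z p > 2 * s" by auto
    with \<omega> show "\<omega> \<in> {\<omega>\<in>space M. \<exists>z\<in>R. \<forall>p\<in>\<eta> \<omega>. dist z p > 2 * s}" by blast
  qed
  moreover obtain A where "A \<in> sets M" "{\<omega>\<in>space M. \<exists>z\<in>R. \<forall>p\<in>\<eta> \<omega>. dist z p > 2 * s} \<subseteq> A"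
    "measure M A \<le> (w / s + 1) * (h / s + 1) * exp (- s\<^sup>2)"
    using poisson_pp_hole_in_rectangle[OF assms(1,2,4,5), of a b] unfolding R_def by blast
  ultimately show ?thesis unfolding R_def by (meson subset_trans)
qed

theorem lemma3p8:
  fixes lam :: real
  assumes "lam > 0"
  shows "\<exists>L0. \<forall>L\<ge>L0. \<forall>(M::'w measure) \<eta> a b.
           poisson_pp M \<eta> \<longrightarrow> a \<ge> (ln L) powr (2/3) \<longrightarrow>
           (let R = {a..a + lam * L} \<times> {b..b + L} in
             \<exists>A\<in>sets M. {\<omega>\<in>space M. voronoi_tiling UNIV (\<eta> \<omega>) R
                                   \<noteq> voronoi_tiling halfplane (halfplane \<inter> \<eta> \<omega>) R} \<subseteq> A
                       \<and> measure M A \<le> 1 / L ^ 3)"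
proof -
  define s where "s = (\<lambda>L::real. ln L powr (2/3) / 3)"
  have "eventually (\<lambda>L. (lam * L / s L + 1) * (L / s L + 1) * exp (- (s L)\<^sup>2) \<le> 1 / L ^ 3) at_top"
    and "eventually (\<lambda>L. 0 < s L) at_top"
    unfolding s_def by real_asymp+
  then have "eventually (\<lambda>L. (lam * L / s L + 1) * (L / s L + 1) * exp (- (s L)\<^sup>2) \<le> 1 / L ^ 3
      \<and> 0 < s L \<and> 0 \<le> L) at_top"
    using eventually_ge_at_top[of 0] by eventually_elim blast
  then obtain L0 where L0: "\<And>L. L \<ge> L0 \<Longrightarrow> (lam * L / s L + 1) * (L / s L + 1) * exp (- (s L)\<^sup>2)
      \<le> 1 / L ^ 3 \<and> 0 < s L \<and> 0 \<le> L"
    by (auto simp: eventually_at_top_linorder)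
  show ?thesis
  proof (intro exI[of _ L0] allI impI, unfold Let_def)
    fix L and M :: "'w measure" and \<eta> a b
    assume L: "L \<ge> L0" and "poisson_pp M \<eta>" and a: "a \<ge> ln L powr (2/3)"
    have s: "0 < s L" "0 \<le> L" and bound: "(lam * L / s L + 1) * (L / s L + 1) * exp (- (s L)\<^sup>2) \<le> 1 / L ^ 3"
      using L0[OF L] by auto
    have "2 * s L < a" using s a unfolding s_def by linarith
    with \<open>poisson_pp M \<eta>\<close> s \<open>lam > 0\<close> obtain A where "A \<in> sets M"
      and "{\<omega>\<in>space M. voronoi_tiling UNIV (\<eta> \<omega>) ({a..a + lam * L} \<times> {b..b + L})
             \<noteq> voronoi_tiling halfplane (halfplane \<inter> \<eta> \<omega>) ({a..a + lam * L} \<times> {b..b + L})} \<subseteq> A"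
      and "measure M A \<le> (lam * L / s L + 1) * (L / s L + 1) * exp (- (s L)\<^sup>2)"
      using poisson_pp_voronoi_tilings_differ[of M \<eta> "s L" a "lam * L" L b] by auto
    with bound show "\<exists>A\<in>sets M. {\<omega>\<in>space M. voronoi_tiling UNIV (\<eta> \<omega>) ({a..a + lam * L} \<times> {b..b + L})
                     \<noteq> voronoi_tiling halfplane (halfplane \<inter> \<eta> \<omega>) ({a..a + lam * L} \<times> {b..b + L})} \<subseteq> A
                   \<and> measure M A \<le> 1 / L ^ 3"
      by (intro bexI[of _ A]) auto
  qed
qed

end
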